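(* Let $(\Theta_\delta)_{\delta>0}$ be open subsets of $\Omega$ and $u_\delta\in H^1(\Theta_\delta;\mathbb R^d)$ with $\|\nabla u_\delta\|_{L^\infty(\Theta_\delta)}\le\delta^{-1/4}$. Then, with $y_\delta:=\mathrm{id}+\delta u_\delta$, $$\lim_{\delta\to0}\Big|\frac1{\delta^2}\int_{\Theta_\delta}W(\nabla y_\delta)\,dx-\frac12\int_{\Theta_\delta}\mathcal Q(e(u_\delta))\,dx\Big|=0.$$
   Context: $d\in\{2,3\}$, $\Omega\subset\mathbb R^d$ a bounded Lipschitz domain. $W:\mathbb R^{d\times d}\to[0,\infty)$ satisfies $W(RF)=W(F)$ for $R\in SO(d)$, $\{W=0\}=SO(d)$, $W\in C^3$ in a neighborhood of $SO(d)$, $W(F)\ge c\,\mathrm{dist}^2(F,SO(d))$ for some $c>0$. $\mathcal Q(F):=D^2W(\mathrm{Id})F:F$, $e(u)=\frac12(\nabla u+\nabla u^T)$. *)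

theory Defs
  imports "HOL-Analysis.Analysis"
begin

text \<open>Special orthogonal group SO(d), matrices as rows: F $ i $ j.\<close>
definition SOd :: "(real^'n^'n) set" where
  "SOd = {R. orthogonal_matrix R \<and> det R = 1}"

definition C3_on :: "(real^'n^'n) set \<Rightarrow> (real^'n^'n \<Rightarrow> real) \<Rightarrow> bool" where
  "C3_on U W \<longleftrightarrow> (\<exists>D1 D2 D3.
     (\<forall>x\<in>U. (W has_derivative blinfun_apply (D1 x)) (at x)) \<and>
     (\<forall>x\<in>U. (D1 has_derivative blinfun_apply (D2 x)) (at x)) \<and>
     (\<forall>x\<in>U. (D2 has_derivative blinfun_apply (D3 x)) (at x)) \<and>
     continuous_on U D3)"

text \<open>Q(F) = D^2 W(Id) F : F, the second Frechet derivative of W at the identity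
  applied twice to F.\<close>
definition Qform :: "(real^'n^'n \<Rightarrow> real) \<Rightarrow> real^'n^'n \<Rightarrow> real" where
  "Qform W F = blinfun_apply
     (frechet_derivative (\<lambda>G. Blinfun (frechet_derivative W (at G))) (at (mat 1)) F) F"

definition symp :: "real^'n^'n \<Rightarrow> real^'n^'n" where
  "symp G = (1/2) *\<^sub>R (G + transpose G)"

text \<open>Bounded Lipschitz domain: open, bounded, connected, and locally (after a rigid
  motion) the strict subgraph of a Lipschitz function of the remaining coordinates.\<close>
definition lipschitz_domain :: "(real^'n) set \<Rightarrow> bool" where
  "lipschitz_domain \<Omega> \<longleftrightarrow> open \<Omega> \<and> bounded \<Omega> \<and> connected \<Omega> \<and> \<Omega> \<noteq> {} \<and>
    (\<forall>p\<in>frontier \<Omega>. \<exists>r>0. \<exists>R::real^'n^'n. \<exists>k. \<exists>g::real^'n \<Rightarrow> real. \<exists>L.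
       orthogonal_matrix R \<and> L-lipschitz_on UNIV g \<and>
       (\<forall>z z'. (\<forall>i. i \<noteq> k \<longrightarrow> z $ i = z' $ i) \<longrightarrow> g z = g z') \<and>
       \<Omega> \<inter> ball p r = {x \<in> ball p r. (R *v (x - p)) $ k < g (R *v (x - p))})"

fun Ck :: "nat \<Rightarrow> (real^'n \<Rightarrow> real) \<Rightarrow> bool" where
  "Ck 0 f = continuous_on UNIV f"
| "Ck (Suc k) f = (\<exists>g. (\<forall>x. (f has_derivative (\<lambda>h. g x \<bullet> h)) (at x)) \<and>
                      (\<forall>i. Ck k (\<lambda>x. g x $ i)))"

definition test_fun :: "(real^'n) set \<Rightarrow> (real^'n \<Rightarrow> real) \<Rightarrow> bool" where
  "test_fun \<Theta> \<phi> \<longleftrightarrow> (\<forall>k. Ck k \<phi>) \<and> compact (closure {x. \<phi> x \<noteq> 0}) \<and> closure {x. \<phi> x \<noteq> 0} \<subseteq> \<Theta>"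

text \<open>u \<in> H^1(\<Theta>;R^d) with weak gradient Du, (Du x) $ i $ j = \<partial>_j u_i.\<close>
definition H1_on :: "(real^'n) set \<Rightarrow> (real^'n \<Rightarrow> real^'n) \<Rightarrow> (real^'n \<Rightarrow> real^'n^'n) \<Rightarrow> bool" where
  "H1_on \<Theta> u Du \<longleftrightarrow>
     u \<in> borel_measurable (lebesgue_on \<Theta>) \<and> Du \<in> borel_measurable (lebesgue_on \<Theta>) \<and>
     integrable (lebesgue_on \<Theta>) (\<lambda>x. (norm (u x))\<^sup>2) \<and>
     integrable (lebesgue_on \<Theta>) (\<lambda>x. (norm (Du x))\<^sup>2) \<and>
     (\<forall>\<phi> g i j. test_fun \<Theta> \<phi> \<longrightarrow> (\<forall>x. (\<phi> has_derivative (\<lambda>h. g x \<bullet> h)) (at x)) \<longrightarrow>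
        (\<integral>x. u x $ i * g x $ j \<partial>lebesgue_on \<Theta>) = - (\<integral>x. Du x $ i $ j * \<phi> x \<partial>lebesgue_on \<Theta>))"

end

theory Submission
  imports Defs
begin

text \<open>
  Since \<open>W \<ge> 0 = W(Id)\<close>, Taylor's formula gives \<open>W(Id + F) = q(F)/2 + O(|F|^3)\<close> with
  \<open>q = D^2 W(Id)\<close>. Frame indifference forces \<open>q(G) = q(e(G))\<close>: if \<open>A\<close> is the skew part
  of \<open>G\<close>, the Cayley rotation \<open>R = (Id - A/2)(Id + A/2)^(-1)\<close> satisfies
  \<open>R(Id + G) = Id + e(G) + O(|G|^2)\<close>, so \<open>q(G) - q(e(G)) = O(|G|^3)\<close>, and a
  2-homogeneous function of cubic order vanishes identically. For \<open>|G| \<le> \<delta>^(-1/4)\<close> this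
  yields \<open>|\<delta>^(-2) W(Id + \<delta> G) - q(e(G))/2| \<le> C \<delta> |G|^3 \<le> C \<delta>^(1/4)\<close>, and integrating
  over \<open>\<Theta>\<^sub>\<delta> \<subseteq> \<Omega>\<close> bounds the difference of the energies by \<open>C |\<Omega>| \<delta>^(1/4)\<close>.
\<close>

section \<open>Matrix algebra\<close>

lemma bilinear_matrix_matrix_mult: "bilinear ((**) :: real^'n^'m \<Rightarrow> real^'p^'n \<Rightarrow> real^'p^'m)"
  by (auto simp: bilinear_def linear_iff vec_eq_iff matrix_matrix_mult_def
      sum.distrib sum_distrib_left algebra_simps)

interpretation matrix_mult: bounded_bilinear "(**) :: real^'n^'m \<Rightarrow> real^'p^'n \<Rightarrow> real^'p^'m"
  by (rule bilinear_conv_bounded_bilinear[THEN iffD1, OF bilinear_matrix_matrix_mult])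

lemma norm_transpose [simp]: "norm (transpose (A :: real^'n^'m)) = norm A"
  by (simp add: norm_eq_sqrt_inner inner_vec_def transpose_def sum.swap[of _ "UNIV::'n set"])

lemma transpose_add: "transpose (A + B) = transpose A + transpose (B :: real^'n^'m)"
  by (simp add: transpose_def vec_eq_iff)

lemma transpose_diff: "transpose (A - B) = transpose A - transpose (B :: real^'n^'m)"
  by (simp add: transpose_def vec_eq_iff)

lemma norm_orthogonal_matrix:
  assumes "orthogonal_matrix (R :: real^'n^'n)"
  shows "norm R = sqrt (real CARD('n))"
proof -
  have "norm (R $ i) = 1" for i
    using assms orthogonal_matrix_orthonormal_rows[of R] by (simp add: row_def)
  then show ?thesis by (simp add: norm_vec_def L2_set_def)
qed

lemma mat1_in_SOd: "mat 1 \<in> SOd"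
  by (simp add: SOd_def orthogonal_matrix_id)

lemma norm_symp_le: "norm (symp A) \<le> norm A"
proof -
  have "norm (symp A) \<le> (1/2) * (norm A + norm (transpose A))"
    unfolding symp_def using norm_triangle_ineq[of A "transpose A"] by simp
  then show ?thesis by simp
qed

lemma norm_skew_part_le: "norm (A - symp A) \<le> norm A"
proof -
  have "A - symp A = (1/2) *\<^sub>R (A - transpose A)"
    by (simp add: symp_def vec_eq_iff field_simps)
  then have "norm (A - symp A) \<le> (1/2) * (norm A + norm (transpose A))"
    using norm_triangle_ineq4[of A "transpose A"] by simp
  then show ?thesis by simp
qed

lemma symp_scaleR: "symp (t *\<^sub>R A) = t *\<^sub>R symp A"
  by (simp add: symp_def transpose_scalar algebra_simps)

lemma transpose_scaled_skew_part: "transpose (t *\<^sub>R (A - symp A)) = - (t *\<^sub>R (A - symp A))"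
  by (simp add: symp_def transpose_def vec_eq_iff field_simps)

lemma matrix_inv_right: "invertible A \<Longrightarrow> A ** matrix_inv A = mat 1"
  unfolding invertible_def matrix_inv_def by (metis (mono_tags, lifting) someI_ex)

section \<open>The Cayley transform and frame indifference\<close>

lemma transpose_id_plus_skew:
  fixes A :: "real^'n^'n"
  assumes "transpose A = - A"
  shows "transpose (mat 1 + A) = mat 1 - A" and "transpose (mat 1 - A) = mat 1 + A"
  by (simp_all add: assms transpose_add transpose_diff)

lemma invertible_id_plus_skew:
  fixes A :: "real^'n^'n"
  assumes skew: "transpose A = - A"
  shows "invertible (mat 1 + A)"
proof -
  have "x = 0" if "(mat 1 + A) *v x = 0" for x
  proof -
    have "x \<bullet> (A *v x) = (transpose A *v x) \<bullet> x"
      by (simp add: dot_lmul_matrix[symmetric])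
    also have "transpose A *v x = - (A *v x)"
      by (simp add: skew matrix_vector_mult_def vec_eq_iff sum_negf)
    finally have "x \<bullet> (A *v x) = 0"
      by (simp add: inner_commute)
    then have "x \<bullet> ((mat 1 + A) *v x) = x \<bullet> x"
      by (simp add: matrix_vector_mult_add_rdistrib inner_add_right)
    with that show ?thesis by simp
  qed
  then show ?thesis
    using matrix_left_invertible_ker invertible_left_inverse by blast
qed

definition cayley :: "real^'n^'n \<Rightarrow> real^'n^'n" where
  "cayley A = (mat 1 - A) ** matrix_inv (mat 1 + A)"

lemma cayley_in_SOd:
  assumes skew: "transpose A = - A"
  shows "cayley A \<in> SOd"
proof -
  define P where "P = matrix_inv (mat 1 + A)"
  have PA: "(mat 1 + A) ** P = mat 1"
    using invertible_id_plus_skew[OF skew] by (simp add: P_def matrix_inv_right)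
  have comm: "(mat 1 + A) ** (mat 1 - A) = (mat 1 - A) ** (mat 1 + A)"
    by (simp add: matrix_mult.add_left matrix_mult.add_right matrix_mult.diff_left
        matrix_mult.diff_right)
  have PtA: "transpose P ** (mat 1 - A) = mat 1"
    using arg_cong[OF PA, of transpose] by (simp add: matrix_transpose_mul transpose_id_plus_skew[OF skew])
  have "transpose (cayley A) ** cayley A = transpose P ** ((mat 1 + A) ** (mat 1 - A)) ** P"
    unfolding cayley_def P_def[symmetric] matrix_transpose_mul transpose_id_plus_skew[OF skew]
    by (simp only: matrix_mul_assoc)
  also have "\<dots> = (transpose P ** (mat 1 - A)) ** ((mat 1 + A) ** P)"
    by (simp add: comm matrix_mul_assoc)
  finally have "orthogonal_matrix (cayley A)"
    by (simp add: orthogonal_matrix PA PtA)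
  moreover have "det (cayley A) = 1"
  proof -
    have "det (mat 1 - A) = det (mat 1 + A)"
      by (metis det_transpose transpose_id_plus_skew(1)[OF skew])
    then show ?thesis
      using arg_cong[OF PA, of det] by (simp add: cayley_def P_def[symmetric] det_mul)
  qed
  ultimately show ?thesis by (simp add: SOd_def)
qed

lemma matrix_inv_id_plus:
  fixes A :: "real^'n^'n"
  assumes "invertible (mat 1 + A)"
  shows "A ** matrix_inv (mat 1 + A) = mat 1 - matrix_inv (mat 1 + A)"
proof -
  have "matrix_inv (mat 1 + A) + A ** matrix_inv (mat 1 + A) = mat 1"
    using matrix_inv_right[OF assms] by (simp add: matrix_mult.add_left)
  then show ?thesis
    by (metis add_diff_cancel_left')
qed

lemma cayley_eq_inv:
  fixes A :: "real^'n^'n"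
  assumes "invertible (mat 1 + A)"
  shows "cayley A = 2 *\<^sub>R matrix_inv (mat 1 + A) - mat 1"
  by (simp add: cayley_def matrix_mult.diff_left matrix_inv_id_plus[OF assms] scaleR_2)

lemma cayley_expansion:
  fixes A :: "real^'n^'n"
  assumes "invertible (mat 1 + A)"
  shows "cayley A = mat 1 - 2 *\<^sub>R A + 2 *\<^sub>R ((A ** A) ** matrix_inv (mat 1 + A))"
proof -
  define P where "P = matrix_inv (mat 1 + A)"
  have "A ** P = A ** ((mat 1 + A) ** P) - (A ** A) ** P"
    by (simp add: matrix_mul_assoc matrix_mult.add_left matrix_mult.add_right)
  also have "\<dots> = A - (A ** A) ** P"
    using matrix_inv_right[OF assms] by (simp add: P_def)
  finally have P: "P = mat 1 - A + (A ** A) ** P"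
    using matrix_inv_id_plus[OF assms]
    by (metis P_def add_diff_cancel_left' diff_add_cancel diff_diff_eq2)
  have "cayley A = 2 *\<^sub>R P - mat 1"
    by (simp add: cayley_eq_inv[OF assms] P_def)
  also have "\<dots> = 2 *\<^sub>R (mat 1 - A + (A ** A) ** P) - mat 1"
    by (simp only: P[symmetric])
  also have "\<dots> = mat 1 - 2 *\<^sub>R A + 2 *\<^sub>R ((A ** A) ** P)"
    by (simp add: scaleR_right_diff_distrib scaleR_right_distrib scaleR_2)
  finally show ?thesis
    by (simp add: P_def)
qed

lemma norm_inv_id_plus_skew_le:
  fixes A :: "real^'n^'n"
  assumes skew: "transpose A = - A"
  shows "norm (matrix_inv (mat 1 + A)) \<le> sqrt (real CARD('n))"
proof -
  have R: "orthogonal_matrix (cayley A)"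
    using cayley_in_SOd[OF skew] by (simp add: SOd_def)
  have I: "norm (mat 1 :: real^'n^'n) = sqrt (real CARD('n))"
    by (rule norm_orthogonal_matrix[OF orthogonal_matrix_id])
  have "matrix_inv (mat 1 + A) = (1/2) *\<^sub>R (cayley A + mat 1)"
    using cayley_eq_inv[OF invertible_id_plus_skew[OF skew]] by simp
  then have "norm (matrix_inv (mat 1 + A)) \<le> (1/2) * (norm (cayley A) + norm (mat 1 :: real^'n^'n))"
    using norm_triangle_ineq[of "cayley A" "mat 1"] by simp
  then show ?thesis
    using norm_orthogonal_matrix[OF R] I by simp
qed

lemma cayley_half_skew_part_residual:
  fixes G :: "real^'n^'n"
  defines "S \<equiv> G - symp G"
  shows "cayley ((1/2) *\<^sub>R S) ** (mat 1 + G) - (mat 1 + symp G)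
    = (1/2) *\<^sub>R (((S ** S) ** matrix_inv (mat 1 + (1/2) *\<^sub>R S)) ** (mat 1 + G)) - S ** G"
proof -
  have skew: "transpose ((1/2) *\<^sub>R S) = - ((1/2) *\<^sub>R S)"
    unfolding S_def by (rule transpose_scaled_skew_part)
  have R: "cayley ((1/2) *\<^sub>R S) = mat 1 - S + (1/2) *\<^sub>R ((S ** S) ** matrix_inv (mat 1 + (1/2) *\<^sub>R S))"
    using cayley_expansion[OF invertible_id_plus_skew[OF skew]]
    by (simp add: matrix_mult.scaleR_left matrix_mult.scaleR_right)
  have "symp G = G - S"
    by (simp add: S_def)
  then show ?thesis
    unfolding R by (simp add: matrix_mult.add_left matrix_mult.diff_left matrix_mult.add_right
        matrix_mult.scaleR_left algebra_simps)
qed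

lemma rotation_approximates_symp:
  obtains K :: real where "0 \<le> K" and
    "\<And>G::real^'n^'n. norm G \<le> 1 \<Longrightarrow>
       \<exists>R\<in>SOd. norm (R ** (mat 1 + G) - (mat 1 + symp G)) \<le> K * (norm G)\<^sup>2"
proof -
  obtain Km where Km: "Km > 0" "\<And>X Y. norm ((X :: real^'n^'n) ** (Y :: real^'n^'n)) \<le> norm X * norm Y * Km"
    using matrix_mult.pos_bounded by blast
  define c where "c = sqrt (real CARD('n))"
  have c: "norm (mat 1 :: real^'n^'n) = c" "0 \<le> c"
    unfolding c_def by (rule norm_orthogonal_matrix[OF orthogonal_matrix_id]) simp
  define K where "K = Km + Km^3 * c * (c + 1) / 2"
  have "\<exists>R\<in>SOd. norm (R ** (mat 1 + G) - (mat 1 + symp G)) \<le> K * (norm G)\<^sup>2"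
    if G: "norm G \<le> 1" for G :: "real^'n^'n"
  proof
    define S where "S = G - symp G"
    define P where "P = matrix_inv (mat 1 + (1/2) *\<^sub>R S)"
    have skew: "transpose ((1/2) *\<^sub>R S) = - ((1/2) *\<^sub>R S)"
      unfolding S_def by (rule transpose_scaled_skew_part)
    then show "cayley ((1/2) *\<^sub>R S) \<in> SOd"
      by (rule cayley_in_SOd)
    have nS: "norm S \<le> norm G"
      unfolding S_def by (rule norm_skew_part_le)
    have nP: "norm P \<le> c"
      unfolding P_def c_def by (rule norm_inv_id_plus_skew_le[OF skew])
    have nG1: "norm (mat 1 + G) \<le> c + 1"
      using norm_triangle_ineq[of "mat 1" G] c G by simp
    have SG: "norm (S ** G) \<le> Km * (norm G)\<^sup>2"
      using Km(2)[of S G] nS Km(1) mult_right_mono[OF nS, of "norm G"]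
      by (smt (verit) mult.commute mult_left_mono norm_ge_zero power2_eq_square)
    have "norm (((S ** S) ** P) ** (mat 1 + G))
        \<le> ((norm S * norm S * Km) * norm P * Km) * norm (mat 1 + G) * Km"
      using Km by (meson mult_right_mono mult_mono norm_ge_zero order_trans less_imp_le)
    also have "\<dots> \<le> ((norm G * norm G * Km) * c * Km) * (c + 1) * Km"
      using nS nP nG1 Km(1) c by (intro mult_mono) auto
    finally have SSPG: "norm (((S ** S) ** P) ** (mat 1 + G)) \<le> Km^3 * c * (c + 1) * (norm G)\<^sup>2"
      by (simp add: power2_eq_square power3_eq_cube mult_ac)
    have "cayley ((1/2) *\<^sub>R S) ** (mat 1 + G) - (mat 1 + symp G)
        = (1/2) *\<^sub>R (((S ** S) ** P) ** (mat 1 + G)) - S ** G"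
      using cayley_half_skew_part_residual[of G] by (simp add: S_def P_def)
    then have "norm (cayley ((1/2) *\<^sub>R S) ** (mat 1 + G) - (mat 1 + symp G))
        \<le> (1/2) * norm (((S ** S) ** P) ** (mat 1 + G)) + norm (S ** G)"
      using norm_triangle_ineq4[of "(1/2) *\<^sub>R (((S ** S) ** P) ** (mat 1 + G))" "S ** G"] by simp
    also have "\<dots> \<le> K * (norm G)\<^sup>2"
      using SG SSPG by (simp add: K_def field_simps)
    finally show "norm (cayley ((1/2) *\<^sub>R S) ** (mat 1 + G) - (mat 1 + symp G)) \<le> K * (norm G)\<^sup>2" .
  qed
  moreover have "0 \<le> K"
    using Km(1) c by (simp add: K_def)
  ultimately show ?thesis
    using that by blast
qed

lemma frame_indifferent_symmetrize:
  fixes W :: "real^'n^'n \<Rightarrow> 'a"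
  assumes frame: "\<And>R F. R \<in> SOd \<Longrightarrow> W (R ** F) = W F"
  obtains K where "0 \<le> K" and
    "\<And>X. norm X \<le> 1 \<Longrightarrow> \<exists>E. W (mat 1 + X) = W (mat 1 + (symp X + E)) \<and> norm E \<le> K * (norm X)\<^sup>2"
proof -
  obtain K where "0 \<le> K" and K: "\<And>X::real^'n^'n. norm X \<le> 1 \<Longrightarrow>
       \<exists>R\<in>SOd. norm (R ** (mat 1 + X) - (mat 1 + symp X)) \<le> K * (norm X)\<^sup>2"
    using rotation_approximates_symp by blast
  have "\<exists>E. W (mat 1 + X) = W (mat 1 + (symp X + E)) \<and> norm E \<le> K * (norm X)\<^sup>2"
    if X: "norm X \<le> 1" for X
  proof -
    obtain R where "R \<in> SOd" and R: "norm (R ** (mat 1 + X) - (mat 1 + symp X)) \<le> K * (norm X)\<^sup>2"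
      using K[OF X] by blast
    show ?thesis
      using frame[OF \<open>R \<in> SOd\<close>, of "mat 1 + X"] R
      by (intro exI[of _ "R ** (mat 1 + X) - (mat 1 + symp X)"]) simp
  qed
  with \<open>0 \<le> K\<close> show ?thesis
    using that by blast
qed

section \<open>Second-order Taylor expansion\<close>

lemma has_vector_derivative_along_line:
  assumes "(f has_derivative f') (at (a + t *\<^sub>R v))"
  shows "((\<lambda>s. f (a + s *\<^sub>R v)) has_vector_derivative f' v) (at t)"
proof -
  have "((\<lambda>s. a + s *\<^sub>R v) has_derivative (\<lambda>s. s *\<^sub>R v)) (at t)"
    by (auto intro!: derivative_eq_intros)
  from has_derivative_compose[OF this assms] show ?thesis
    unfolding has_vector_derivative_def
    by (simp add: linear_cmul[OF has_derivative_linear[OF assms]])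
qed

lemma has_vector_derivative_blinfun_apply_left:
  assumes "(B has_vector_derivative B') (at t)"
  shows "((\<lambda>s. blinfun_apply (B s) x) has_vector_derivative blinfun_apply B' x) (at t)"
  using bounded_linear.has_derivative[OF blinfun.bounded_linear_left assms[unfolded has_vector_derivative_def]]
  unfolding has_vector_derivative_def by (simp add: blinfun.scaleR_left)

lemma abs_blinfun_apply2_le:
  "\<bar>blinfun_apply (blinfun_apply B x) y\<bar> \<le> norm B * norm x * norm (y :: 'a::real_normed_vector)"
proof -
  have "\<bar>blinfun_apply (blinfun_apply B x) y\<bar> \<le> norm (blinfun_apply B x) * norm y"
    by (metis norm_blinfun real_norm_def)
  also have "\<dots> \<le> norm B * norm x * norm y"
    by (simp add: mult_right_mono norm_blinfun)
  finally show ?thesis .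
qed

lemma taylor2_lagrange_remainder:
  fixes f :: "'a::real_normed_vector \<Rightarrow> real"
  assumes segment: "\<And>t. 0 \<le> t \<Longrightarrow> t \<le> 1 \<Longrightarrow> a + t *\<^sub>R h \<in> U"
    and f': "\<forall>x\<in>U. (f has_derivative blinfun_apply (f' x)) (at x)"
    and f'': "\<forall>x\<in>U. (f' has_derivative blinfun_apply (f'' x)) (at x)"
    and f''': "\<forall>x\<in>U. (f'' has_derivative blinfun_apply (f''' x)) (at x)"
  obtains t where "0 < t" "t < 1"
    and "f (a + h) - f a - blinfun_apply (f' a) h - blinfun_apply (blinfun_apply (f'' a) h) h / 2
      = blinfun_apply (blinfun_apply (blinfun_apply (f''' (a + t *\<^sub>R h)) h) h) h / 6"
proof -
  define d where "d = (\<lambda>(m::nat) t.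
    if m = 0 then f (a + t *\<^sub>R h)
    else if m = 1 then blinfun_apply (f' (a + t *\<^sub>R h)) h
    else if m = 2 then blinfun_apply (blinfun_apply (f'' (a + t *\<^sub>R h)) h) h
    else blinfun_apply (blinfun_apply (blinfun_apply (f''' (a + t *\<^sub>R h)) h) h) h)"
  have "DERIV (d m) t :> d (Suc m) t" if "m < 3" "0 \<le> t" "t \<le> 1" for m t
  proof -
    have x: "a + t *\<^sub>R h \<in> U"
      using segment that by blast
    consider "m = 0" | "m = 1" | "m = 2"
      using \<open>m < 3\<close> by linarith
    then show ?thesis
    proof cases
      case 1
      with has_vector_derivative_along_line[of f _ a t h] f' x show ?thesis
        by (simp add: d_def has_real_derivative_iff_has_vector_derivative)
    next
      case 2
      with has_vector_derivative_blinfun_apply_left[OF has_vector_derivative_along_line[of f' _ a t h]]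
        f'' x show ?thesis
        by (simp add: d_def has_real_derivative_iff_has_vector_derivative)
    next
      case 3
      with has_vector_derivative_blinfun_apply_left[OF has_vector_derivative_blinfun_apply_left[OF
          has_vector_derivative_along_line[of f'' _ a t h]]] f''' x show ?thesis
        by (simp add: d_def has_real_derivative_iff_has_vector_derivative numeral_eq_Suc)
    qed
  qed
  then obtain t where "0 < t" "t < 1"
    and "d 0 1 = (\<Sum>m<3. d m 0 / fact m * 1 ^ m) + d 3 t / fact 3 * 1 ^ 3"
    using Maclaurin[of 1 3 d "d 0"] by auto
  then show ?thesis
    using that by (simp add: d_def numeral_eq_Suc fact_numeral)
qed

lemma taylor2_cubic_remainder:
  fixes f :: "'a::euclidean_space \<Rightarrow> real"
  assumes U: "cball a r \<subseteq> U"
    and f': "\<forall>x\<in>U. (f has_derivative blinfun_apply (f' x)) (at x)"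
    and f'': "\<forall>x\<in>U. (f' has_derivative blinfun_apply (f'' x)) (at x)"
    and f''': "\<forall>x\<in>U. (f'' has_derivative blinfun_apply (f''' x)) (at x)"
    and cont: "continuous_on U f'''"
  obtains C where "0 \<le> C" and "\<And>h. norm h \<le> r \<Longrightarrow>
    \<bar>f (a + h) - f a - blinfun_apply (f' a) h - blinfun_apply (blinfun_apply (f'' a) h) h / 2\<bar>
      \<le> C * norm h ^ 3"
proof -
  have "compact (f''' ` cball a r)"
    by (rule compact_continuous_image[OF continuous_on_subset[OF cont U]]) simp
  then obtain B where "0 < B" and B: "\<And>x. x \<in> cball a r \<Longrightarrow> norm (f''' x) \<le> B"
    using compact_imp_bounded bounded_pos by (metis imageI)
  have "\<bar>f (a + h) - f a - blinfun_apply (f' a) h - blinfun_apply (blinfun_apply (f'' a) h) h / 2\<bar>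
      \<le> B / 6 * norm h ^ 3" if h: "norm h \<le> r" for h
  proof -
    have segment: "a + t *\<^sub>R h \<in> cball a r" if "0 \<le> t" "t \<le> 1" for t
    proof -
      have "norm (t *\<^sub>R h) \<le> r"
        using h that mult_left_le_one_le[of "norm h" t] by simp
      then show ?thesis
        by (simp add: dist_norm)
    qed
    obtain t where t: "0 < t" "t < 1"
      and remainder: "f (a + h) - f a - blinfun_apply (f' a) h - blinfun_apply (blinfun_apply (f'' a) h) h / 2
        = blinfun_apply (blinfun_apply (blinfun_apply (f''' (a + t *\<^sub>R h)) h) h) h / 6"
      using taylor2_lagrange_remainder[OF _ f' f'' f'''] segment U by blast
    define x where "x = a + t *\<^sub>R h"
    have "\<bar>blinfun_apply (blinfun_apply (blinfun_apply (f''' x) h) h) h\<bar>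
        \<le> norm (blinfun_apply (f''' x) h) * norm h * norm h"
      by (rule abs_blinfun_apply2_le)
    also have "\<dots> \<le> norm (f''' x) * norm h * norm h * norm h"
      by (simp add: mult_right_mono norm_blinfun)
    also have "\<dots> = norm (f''' x) * norm h ^ 3"
      by (simp add: power3_eq_cube mult_ac)
    also have "\<dots> \<le> B * norm h ^ 3"
      using B[of x] segment[of t] t by (simp add: x_def mult_right_mono)
    finally show ?thesis
      unfolding remainder x_def by simp
  qed
  with \<open>0 < B\<close> show ?thesis
    using that[of "B / 6"] by simp
qed

section \<open>The quadratic form of a frame-indifferent energy\<close>

definition quadratic_form :: "('a::real_normed_vector \<Rightarrow>\<^sub>L 'a \<Rightarrow>\<^sub>L real) \<Rightarrow> 'a \<Rightarrow> real" where
  "quadratic_form B x = blinfun_apply (blinfun_apply B x) x"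

lemma quadratic_form_scaleR: "quadratic_form B (t *\<^sub>R x) = t\<^sup>2 * quadratic_form B x"
  by (simp add: quadratic_form_def blinfun.scaleR_left blinfun.scaleR_right power2_eq_square)

lemma abs_quadratic_form_le: "\<bar>quadratic_form B x\<bar> \<le> norm B * (norm x)\<^sup>2"
  using abs_blinfun_apply2_le[of B x x] by (simp add: quadratic_form_def power2_eq_square mult_ac)

lemma abs_quadratic_form_diff_le:
  "\<bar>quadratic_form B y - quadratic_form B z\<bar> \<le> norm B * (norm y + norm z) * norm (y - z)"
proof -
  have "quadratic_form B y - quadratic_form B z
      = blinfun_apply (blinfun_apply B y) (y - z) + blinfun_apply (blinfun_apply B (y - z)) z"
    by (simp add: quadratic_form_def blinfun.diff_left blinfun.diff_right)
  then have "\<bar>quadratic_form B y - quadratic_form B z\<bar>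
      \<le> norm B * norm y * norm (y - z) + norm B * norm (y - z) * norm z"
    using abs_blinfun_apply2_le[of B y "y - z"] abs_blinfun_apply2_le[of B "y - z" z] by linarith
  then show ?thesis
    by (simp add: algebra_simps)
qed

lemma continuous_on_quadratic_form: "continuous_on S (quadratic_form B)"
  unfolding quadratic_form_def by (intro continuous_intros)

lemma quadratic_homogeneous_eq_zero:
  fixes f :: "'a::real_normed_vector \<Rightarrow> real"
  assumes hom: "\<And>t x. f (t *\<^sub>R x) = t\<^sup>2 * f x"
    and "0 < \<rho>"
    and small: "\<And>x. norm x \<le> \<rho> \<Longrightarrow> \<bar>f x\<bar> \<le> M * norm x ^ 3"
  shows "f x = 0"
proof -
  have scaled: "\<bar>f x\<bar> \<le> M * norm x ^ 3 * t" if t: "0 < t" "t * norm x < \<rho>" for t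
  proof -
    have "t\<^sup>2 * \<bar>f x\<bar> = \<bar>f (t *\<^sub>R x)\<bar>"
      by (simp add: hom abs_mult)
    also have "\<dots> \<le> M * (t * norm x) ^ 3"
      using small[of "t *\<^sub>R x"] t by simp
    also have "\<dots> = t\<^sup>2 * (M * norm x ^ 3 * t)"
      by (simp add: power2_eq_square power3_eq_cube mult_ac)
    finally show ?thesis
      using t by simp
  qed
  have "((\<lambda>t. t * norm x) \<longlongrightarrow> 0) (at_right 0)"
    by (intro tendsto_eq_intros) auto
  from order_tendstoD(2)[OF this \<open>0 < \<rho>\<close>] eventually_at_right_less[of 0]
  have "\<forall>\<^sub>F t in at_right 0. \<bar>f x\<bar> \<le> M * norm x ^ 3 * t"
    by eventually_elim (rule scaled)
  moreover have "((\<lambda>t. M * norm x ^ 3 * t) \<longlongrightarrow> 0) (at_right 0)"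
    by (intro tendsto_eq_intros) auto
  ultimately have "\<bar>f x\<bar> \<le> 0"
    by (intro tendsto_lowerbound) auto
  then show ?thesis
    by simp
qed

lemma quadratic_form_diff_le_of_expansion:
  fixes W :: "'a::real_normed_vector \<Rightarrow> real"
  assumes expansion: "\<And>F. norm F \<le> r \<Longrightarrow> \<bar>W (a + F) - quadratic_form B F / 2\<bar> \<le> C * norm F ^ 3"
    and "norm X \<le> r" "norm Y \<le> r" and "W (a + X) = W (a + Y)"
  shows "\<bar>quadratic_form B X - quadratic_form B Y\<bar> \<le> 2 * C * (norm X ^ 3 + norm Y ^ 3)"
  using expansion[OF assms(2)] expansion[OF assms(3)] assms(4) by (auto simp: abs_le_iff ring_distribs)

lemma quadratic_form_symp_cubic_bound:
  fixes W :: "real^'n^'n \<Rightarrow> real"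
  assumes "0 < r" and "0 \<le> C"
    and expansion: "\<And>F. norm F \<le> r \<Longrightarrow> \<bar>W (mat 1 + F) - quadratic_form B F / 2\<bar> \<le> C * norm F ^ 3"
    and frame: "\<And>R F. R \<in> SOd \<Longrightarrow> W (R ** F) = W F"
  obtains \<rho> M where "0 < \<rho>"
    and "\<And>X. norm X \<le> \<rho> \<Longrightarrow> \<bar>quadratic_form B (symp X) - quadratic_form B X\<bar> \<le> M * norm X ^ 3"
proof -
  obtain K where "0 \<le> K" and K: "\<And>X. norm X \<le> 1 \<Longrightarrow>
      \<exists>E. W (mat 1 + X) = W (mat 1 + (symp X + E)) \<and> norm E \<le> K * (norm X)\<^sup>2"
    using frame_indifferent_symmetrize[OF frame] by blast
  define L where "L = 1 + K"
  define \<rho> where "\<rho> = min 1 (r / L)"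
  have "\<bar>quadratic_form B (symp X) - quadratic_form B X\<bar>
      \<le> (2 * C * (1 + L ^ 3) + norm B * (L + 1) * K) * norm X ^ 3"
    if X: "norm X \<le> \<rho>" for X :: "real^'n^'n"
  proof -
    define x where "x = norm X"
    have "0 \<le> x" "x \<le> 1" "L * x \<le> r"
      using X \<open>0 \<le> K\<close> by (auto simp: x_def L_def \<rho>_def field_simps)
    moreover have "x \<le> L * x"
      using \<open>0 \<le> x\<close> \<open>0 \<le> K\<close> by (simp add: L_def distrib_right)
    ultimately have "x \<le> r"
      by linarith
    obtain E where W: "W (mat 1 + X) = W (mat 1 + (symp X + E))" and E: "norm E \<le> K * x\<^sup>2"
      using K[of X] \<open>x \<le> 1\<close> by (auto simp: x_def)
    have "norm E \<le> K * x"
      using E \<open>0 \<le> x\<close> \<open>x \<le> 1\<close> \<open>0 \<le> K\<close> mult_left_le_one_le[of x x]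
      by (smt (verit) mult_left_mono power2_eq_square)
    then have Y: "norm (symp X + E) \<le> L * x"
      using norm_triangle_ineq[of "symp X" E] norm_symp_le[of X]
      by (simp add: L_def x_def algebra_simps)
    have "\<bar>quadratic_form B X - quadratic_form B (symp X + E)\<bar>
        \<le> 2 * C * (x ^ 3 + norm (symp X + E) ^ 3)"
      using quadratic_form_diff_le_of_expansion[OF expansion _ _ W] \<open>x \<le> r\<close> Y \<open>L * x \<le> r\<close>
      by (simp add: x_def)
    also have "\<dots> \<le> 2 * C * (x ^ 3 + (L * x) ^ 3)"
      using Y \<open>0 \<le> C\<close> by (intro mult_left_mono add_left_mono power_mono) auto
    finally have "\<bar>quadratic_form B X - quadratic_form B (symp X + E)\<bar> \<le> 2 * C * (1 + L ^ 3) * x ^ 3"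
      by (simp add: algebra_simps power_mult_distrib)
    moreover have "\<bar>quadratic_form B (symp X + E) - quadratic_form B (symp X)\<bar>
        \<le> norm B * (norm (symp X + E) + norm (symp X)) * norm E"
      using abs_quadratic_form_diff_le[of B "symp X + E" "symp X"] by simp
    moreover have "\<dots> \<le> norm B * (L * x + x) * (K * x\<^sup>2)"
      using Y norm_symp_le[of X] E \<open>0 \<le> x\<close> \<open>0 \<le> K\<close>
      by (intro mult_mono add_mono) (auto simp: x_def L_def)
    ultimately show ?thesis
      by (simp add: x_def algebra_simps power2_eq_square power3_eq_cube abs_le_iff)
  qed
  moreover have "0 < \<rho>"
    using \<open>0 < r\<close> \<open>0 \<le> K\<close> by (simp add: \<rho>_def L_def)
  ultimately show ?thesis
    using that by blast
qed

lemma quadratic_form_symp_eq: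
  fixes W :: "real^'n^'n \<Rightarrow> real"
  assumes "0 < r" and "0 \<le> C"
    and expansion: "\<And>F. norm F \<le> r \<Longrightarrow> \<bar>W (mat 1 + F) - quadratic_form B F / 2\<bar> \<le> C * norm F ^ 3"
    and frame: "\<And>R F. R \<in> SOd \<Longrightarrow> W (R ** F) = W F"
  shows "quadratic_form B (symp G) = quadratic_form B G"
proof -
  obtain \<rho> M where "0 < \<rho>" and "\<And>X. norm X \<le> \<rho> \<Longrightarrow>
      \<bar>quadratic_form B (symp X) - quadratic_form B X\<bar> \<le> M * norm X ^ 3"
    using quadratic_form_symp_cubic_bound[OF assms] by blast
  then have "quadratic_form B (symp G) - quadratic_form B G = 0"
    by (intro quadratic_homogeneous_eq_zero[where f = "\<lambda>X. quadratic_form B (symp X) - quadratic_form B X"])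
      (simp_all add: symp_scaleR quadratic_form_scaleR algebra_simps)
  then show ?thesis
    by simp
qed

lemma Qform_eq_quadratic_form:
  fixes W :: "real^'n^'n \<Rightarrow> real"
  assumes U: "open U" "mat 1 \<in> U"
    and W': "\<forall>x\<in>U. (W has_derivative blinfun_apply (D1 x)) (at x)"
    and W'': "\<forall>x\<in>U. (D1 has_derivative blinfun_apply (D2 x)) (at x)"
  shows "Qform W F = quadratic_form (D2 (mat 1)) F"
proof -
  have D1: "Blinfun (frechet_derivative W (at x)) = D1 x" if "x \<in> U" for x
  proof -
    have "blinfun_apply (D1 x) = frechet_derivative W (at x)"
      using frechet_derivative_at[of W "blinfun_apply (D1 x)" x] W' that by blast
    then show ?thesis
      by (metis blinfun_apply_inverse)
  qed
  have "((\<lambda>G. Blinfun (frechet_derivative W (at G))) has_derivative blinfun_apply (D2 (mat 1))) (at (mat 1))"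
    by (rule has_derivative_transform_within_open[OF _ U]) (use W'' U D1 in auto)
  then have "frechet_derivative (\<lambda>G. Blinfun (frechet_derivative W (at G))) (at (mat 1))
      = blinfun_apply (D2 (mat 1))"
    using frechet_derivative_at by metis
  then show ?thesis
    by (simp add: Qform_def quadratic_form_def)
qed

lemma frame_indifferent_energy_expansion:
  fixes W :: "real^'n^'n \<Rightarrow> real"
  assumes nonneg: "\<forall>F. 0 \<le> W F" and "W (mat 1) = 0"
    and frame: "\<forall>R F. R \<in> SOd \<longrightarrow> W (R ** F) = W F"
    and U: "open U" "mat 1 \<in> U" and "C3_on U W"
  obtains r C B where "0 < r" "0 \<le> C" "continuous_on (cball (mat 1) r) W"
    and "\<And>F. Qform W (symp F) = quadratic_form B F"
    and "\<And>F. norm F \<le> r \<Longrightarrow> \<bar>W (mat 1 + F) - quadratic_form B F / 2\<bar> \<le> C * norm F ^ 3"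
proof -
  obtain D1 D2 D3 where
    W': "\<forall>x\<in>U. (W has_derivative blinfun_apply (D1 x)) (at x)" and
    W'': "\<forall>x\<in>U. (D1 has_derivative blinfun_apply (D2 x)) (at x)" and
    W''': "\<forall>x\<in>U. (D2 has_derivative blinfun_apply (D3 x)) (at x)" and
    "continuous_on U D3"
    using \<open>C3_on U W\<close> unfolding C3_on_def by blast
  obtain r where "0 < r" and r: "cball (mat 1) r \<subseteq> U"
    using open_contains_cball U by blast
  obtain C where "0 \<le> C" and taylor: "\<And>h. norm h \<le> r \<Longrightarrow>
      \<bar>W (mat 1 + h) - W (mat 1) - blinfun_apply (D1 (mat 1)) h
        - blinfun_apply (blinfun_apply (D2 (mat 1)) h) h / 2\<bar> \<le> C * norm h ^ 3"
    using taylor2_cubic_remainder[OF r W' W'' W''' \<open>continuous_on U D3\<close>] by blast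
  have "blinfun_apply (D1 (mat 1)) = (\<lambda>h. 0)"
    using W' U(2) nonneg \<open>W (mat 1) = 0\<close>
    by (intro has_derivative_local_min[of W _ "mat 1"]) auto
  then have expansion: "\<bar>W (mat 1 + F) - quadratic_form (D2 (mat 1)) F / 2\<bar> \<le> C * norm F ^ 3"
    if "norm F \<le> r" for F
    using taylor[OF that] \<open>W (mat 1) = 0\<close> by (simp add: quadratic_form_def)
  have "Qform W (symp F) = quadratic_form (D2 (mat 1)) F" for F
    using Qform_eq_quadratic_form[OF U W' W''] quadratic_form_symp_eq[OF \<open>0 < r\<close> \<open>0 \<le> C\<close> expansion]
      frame by auto
  moreover have "continuous_on (cball (mat 1) r) W"
    using W' r by (intro continuous_at_imp_continuous_on) (auto dest: has_derivative_continuous)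
  ultimately show ?thesis
    using that \<open>0 < r\<close> \<open>0 \<le> C\<close> expansion by blast
qed

section \<open>Integral estimates\<close>

lemma borel_measurable_lebesgue_on_AE_eq:
  fixes f g :: "'a::euclidean_space \<Rightarrow> 'b::euclidean_space"
  assumes S: "S \<in> sets lebesgue" and f: "f \<in> borel_measurable (lebesgue_on S)"
    and ae: "AE x in lebesgue_on S. f x = g x"
  shows "g \<in> borel_measurable (lebesgue_on S)"
proof -
  have "AE x in lebesgue. x \<in> S \<longrightarrow> f x = g x"
    using ae S by (simp add: AE_restrict_space_iff)
  then obtain N where N: "N \<in> null_sets lebesgue" "\<And>x. x \<notin> N \<Longrightarrow> x \<in> S \<longrightarrow> f x = g x"
    unfolding completion.AE_iff_null_sets by auto
  have "f measurable_on S"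
    using f S measurable_on_iff_borel_measurable by blast
  then have "g measurable_on S"
    by (rule measurable_on_spike[of _ _ N]) (use N negligible_iff_null_sets in auto)
  then show ?thesis
    using S measurable_on_iff_borel_measurable by blast
qed

lemma borel_measurable_continuous_on_AE_range:
  fixes f :: "'a::euclidean_space \<Rightarrow> 'b::euclidean_space" and w :: "'b \<Rightarrow> 'c::euclidean_space"
  assumes S: "S \<in> sets lebesgue" and f: "f \<in> borel_measurable (lebesgue_on S)"
    and K: "closed K" "k \<in> K" and w: "continuous_on K w"
    and ae: "AE x in lebesgue_on S. f x \<in> K"
  shows "(\<lambda>x. w (f x)) \<in> borel_measurable (lebesgue_on S)"
proof -
  define h where "h x = (if f x \<in> K then f x else k)" for x
  have h: "h \<in> borel_measurable (lebesgue_on S)"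
    unfolding h_def using f borel_closed[OF K(1)] by measurable
  have hK: "h \<in> space (lebesgue_on S) \<rightarrow> K"
    using K(2) by (auto simp: h_def)
  have "(\<lambda>x. w (h x)) \<in> borel_measurable (lebesgue_on S)"
    using measurable_comp[OF measurable_restrict_space2[OF hK h] borel_measurable_continuous_on_restrict[OF w]]
    by (simp add: comp_def)
  moreover have "AE x in lebesgue_on S. w (h x) = w (f x)"
    using ae by eventually_elim (simp add: h_def)
  ultimately show ?thesis
    by (rule borel_measurable_lebesgue_on_AE_eq[OF S])
qed

lemma abs_integral_diff_le_of_AE_bound:
  fixes f g :: "'a \<Rightarrow> real"
  assumes "finite_measure M" and f: "f \<in> borel_measurable M" and g: "integrable M g"
    and bound: "AE x in M. \<bar>c * f x - g x\<bar> \<le> \<epsilon>"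
  shows "\<bar>c * (\<integral>x. f x \<partial>M) - (\<integral>x. g x \<partial>M)\<bar> \<le> \<epsilon> * measure M (space M)"
proof -
  interpret finite_measure M by (rule assms(1))
  have D: "integrable M (\<lambda>x. c * f x - g x)"
    using f g bound by (intro integrable_const_bound[where B = \<epsilon>]) auto
  have "c * (\<integral>x. f x \<partial>M) = (\<integral>x. (c * f x - g x) + g x \<partial>M)"
    by simp
  also have "\<dots> = (\<integral>x. c * f x - g x \<partial>M) + (\<integral>x. g x \<partial>M)"
    by (rule Bochner_Integration.integral_add[OF D g])
  finally have "\<bar>c * (\<integral>x. f x \<partial>M) - (\<integral>x. g x \<partial>M)\<bar> = \<bar>\<integral>x. c * f x - g x \<partial>M\<bar>"
    by simp
  also have "\<dots> \<le> (\<integral>x. \<bar>c * f x - g x\<bar> \<partial>M)"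
    using integral_norm_bound[of M "\<lambda>x. c * f x - g x"] by simp
  also have "\<dots> \<le> (\<integral>x. \<epsilon> \<partial>M)"
    by (rule integral_mono_AE) (use D bound in auto)
  finally show ?thesis
    by (simp add: mult.commute)
qed

lemma rescaled_expansion_bound:
  fixes w :: "'a::real_normed_vector \<Rightarrow> real"
  assumes expansion: "\<And>F. norm F \<le> r \<Longrightarrow> \<bar>w (a + F) - quadratic_form B F / 2\<bar> \<le> C * norm F ^ 3"
    and "0 \<le> C" "0 < \<delta>" "\<delta> powr (3/4) \<le> r" and G: "norm G \<le> \<delta> powr (-1/4)"
  shows "norm (\<delta> *\<^sub>R G) \<le> r"
    and "\<bar>(1/\<delta>\<^sup>2) * w (a + \<delta> *\<^sub>R G) - quadratic_form B G / 2\<bar> \<le> C * \<delta> powr (1/4)"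
proof -
  have "norm (\<delta> *\<^sub>R G) \<le> \<delta> * \<delta> powr (-1/4)"
    using G \<open>0 < \<delta>\<close> by simp
  also have "\<dots> = \<delta> powr (3/4)"
    using \<open>0 < \<delta>\<close> by (simp add: powr_add[symmetric] powr_mult_base)
  finally have small: "norm (\<delta> *\<^sub>R G) \<le> \<delta> powr (3/4)" .
  then show "norm (\<delta> *\<^sub>R G) \<le> r"
    using \<open>\<delta> powr (3/4) \<le> r\<close> by linarith
  have "\<bar>(1/\<delta>\<^sup>2) * w (a + \<delta> *\<^sub>R G) - quadratic_form B G / 2\<bar>
      = (1/\<delta>\<^sup>2) * \<bar>w (a + \<delta> *\<^sub>R G) - quadratic_form B (\<delta> *\<^sub>R G) / 2\<bar>"
    using \<open>0 < \<delta>\<close> by (simp add: quadratic_form_scaleR abs_mult field_simps)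
  also have "\<dots> \<le> (1/\<delta>\<^sup>2) * (C * norm (\<delta> *\<^sub>R G) ^ 3)"
    using expansion[OF \<open>norm (\<delta> *\<^sub>R G) \<le> r\<close>] by (intro mult_left_mono) simp_all
  also have "\<dots> \<le> (1/\<delta>\<^sup>2) * (C * (\<delta> powr (3/4)) ^ 3)"
    using small \<open>0 \<le> C\<close> by (intro mult_left_mono power_mono) auto
  also have "(\<delta> powr (3/4)) ^ 3 = \<delta> powr (2 + 1/4)"
    using \<open>0 < \<delta>\<close> by (simp add: powr_power)
  also have "\<dots> = \<delta>\<^sup>2 * \<delta> powr (1/4)"
    using \<open>0 < \<delta>\<close> by (simp only: powr_add powr_numeral less_imp_le)
  finally show "\<bar>(1/\<delta>\<^sup>2) * w (a + \<delta> *\<^sub>R G) - quadratic_form B G / 2\<bar> \<le> C * \<delta> powr (1/4)"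
    using \<open>0 < \<delta>\<close> by simp
qed

lemma linearized_energy_integral_bound:
  fixes w :: "'a::euclidean_space \<Rightarrow> real" and g :: "'b::euclidean_space \<Rightarrow> 'a"
  assumes expansion: "\<And>F. norm F \<le> r \<Longrightarrow> \<bar>w (a + F) - quadratic_form B F / 2\<bar> \<le> C * norm F ^ 3"
    and "0 \<le> C" and w: "continuous_on (cball a r) w"
    and T: "T \<in> lmeasurable" and g: "g \<in> borel_measurable (lebesgue_on T)"
    and g_bound: "AE x in lebesgue_on T. norm (g x) \<le> \<delta> powr (-1/4)"
    and \<delta>: "0 < \<delta>" "\<delta> powr (3/4) \<le> r"
  shows "\<bar>(1/\<delta>\<^sup>2) * (\<integral>x. w (a + \<delta> *\<^sub>R g x) \<partial>lebesgue_on T)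
           - (1/2) * (\<integral>x. quadratic_form B (g x) \<partial>lebesgue_on T)\<bar>
         \<le> C * \<delta> powr (1/4) * measure lebesgue T"
proof -
  note pointwise = rescaled_expansion_bound[OF expansion \<open>0 \<le> C\<close> \<delta>]
  interpret finite_measure "lebesgue_on T"
    using T by (rule finite_measure_lebesgue_on)
  have T_sets: "T \<in> sets lebesgue"
    using T by (rule fmeasurableD)
  have "(\<lambda>x. w (a + \<delta> *\<^sub>R g x)) \<in> borel_measurable (lebesgue_on T)"
  proof (rule borel_measurable_continuous_on_AE_range[OF T_sets _ closed_cball _ w])
    have "0 \<le> r"
      using \<delta>(2) powr_ge_zero[of \<delta> "3/4"] by linarith
    then show "a \<in> cball a r"
      by simp
    show "(\<lambda>x. a + \<delta> *\<^sub>R g x) \<in> borel_measurable (lebesgue_on T)"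
      using g by measurable
    show "AE x in lebesgue_on T. a + \<delta> *\<^sub>R g x \<in> cball a r"
      using g_bound by eventually_elim (use pointwise(1) in \<open>simp add: dist_norm\<close>)
  qed
  moreover have "integrable (lebesgue_on T) (\<lambda>x. quadratic_form B (g x) / 2)"
  proof (intro integrable_const_bound[where B = "norm B * (\<delta> powr (-1/4))\<^sup>2 / 2"])
    show "AE x in lebesgue_on T. norm (quadratic_form B (g x) / 2) \<le> norm B * (\<delta> powr (-1/4))\<^sup>2 / 2"
      using g_bound
    proof eventually_elim
      case (elim x)
      then show ?case
        using abs_quadratic_form_le[of B "g x"] mult_left_mono[OF power_mono[OF elim], of "norm B" 2]
        by simp
    qed
    show "(\<lambda>x. quadratic_form B (g x) / 2) \<in> borel_measurable (lebesgue_on T)"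
      using borel_measurable_continuous_on[OF continuous_on_quadratic_form g] by measurable
  qed
  moreover have "AE x in lebesgue_on T.
      \<bar>(1/\<delta>\<^sup>2) * w (a + \<delta> *\<^sub>R g x) - quadratic_form B (g x) / 2\<bar> \<le> C * \<delta> powr (1/4)"
    using g_bound by eventually_elim (rule pointwise(2))
  ultimately have "\<bar>(1/\<delta>\<^sup>2) * (\<integral>x. w (a + \<delta> *\<^sub>R g x) \<partial>lebesgue_on T)
      - (\<integral>x. quadratic_form B (g x) / 2 \<partial>lebesgue_on T)\<bar>
      \<le> C * \<delta> powr (1/4) * measure (lebesgue_on T) (space (lebesgue_on T))"
    by (rule abs_integral_diff_le_of_AE_bound[OF finite_measure_axioms])
  also have "measure (lebesgue_on T) (space (lebesgue_on T)) = measure lebesgue T"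
    using T_sets by (simp add: measure_restrict_space)
  finally show ?thesis
    by simp
qed

lemma tendsto_powr_at_right_0:
  assumes "0 < p"
  shows "((\<lambda>\<delta>::real. \<delta> powr p) \<longlongrightarrow> 0) (at_right 0)"
proof (rule tendsto_zero_powrI[OF tendsto_ident_at tendsto_const _ assms])
  show "\<forall>\<^sub>F \<delta> in at_right (0::real). 0 \<le> \<delta>"
    using eventually_at_right_less[of "0::real"] by (rule eventually_mono) simp
qed

lemma linearized_energy_tendsto:
  fixes w :: "'a::euclidean_space \<Rightarrow> real" and g :: "real \<Rightarrow> 'b::euclidean_space \<Rightarrow> 'a"
  assumes expansion: "\<And>F. norm F \<le> r \<Longrightarrow> \<bar>w (a + F) - quadratic_form B F / 2\<bar> \<le> C * norm F ^ 3"
    and "0 < r" "0 \<le> C" and w: "continuous_on (cball a r) w"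
    and S: "S \<in> lmeasurable" and T: "\<And>\<delta>. 0 < \<delta> \<Longrightarrow> T \<delta> \<in> sets lebesgue \<and> T \<delta> \<subseteq> S"
    and g: "\<And>\<delta>. 0 < \<delta> \<Longrightarrow> g \<delta> \<in> borel_measurable (lebesgue_on (T \<delta>))"
    and g_bound: "\<And>\<delta>. 0 < \<delta> \<Longrightarrow> AE x in lebesgue_on (T \<delta>). norm (g \<delta> x) \<le> \<delta> powr (-1/4)"
  shows "((\<lambda>\<delta>. \<bar>(1/\<delta>\<^sup>2) * (\<integral>x. w (a + \<delta> *\<^sub>R g \<delta> x) \<partial>lebesgue_on (T \<delta>))
           - (1/2) * (\<integral>x. quadratic_form B (g \<delta> x) \<partial>lebesgue_on (T \<delta>))\<bar>) \<longlongrightarrow> 0) (at_right 0)"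
    (is "(?gap \<longlongrightarrow> 0) _")
proof -
  have "((\<lambda>\<delta>::real. \<delta> powr (3/4)) \<longlongrightarrow> 0) (at_right 0)"
    by (rule tendsto_powr_at_right_0) simp
  from order_tendstoD(2)[OF this \<open>0 < r\<close>] eventually_at_right_less[of 0]
  have bound: "\<forall>\<^sub>F \<delta> in at_right 0. ?gap \<delta> \<le> C * measure lebesgue S * \<delta> powr (1/4)"
  proof eventually_elim
    case (elim \<delta>)
    then have "T \<delta> \<in> lmeasurable" "T \<delta> \<subseteq> S"
      using T S by (auto intro: fmeasurableI2)
    with elim have "?gap \<delta> \<le> C * \<delta> powr (1/4) * measure lebesgue (T \<delta>)"
      by (intro linearized_energy_integral_bound[OF expansion \<open>0 \<le> C\<close> w] g g_bound) auto
    also have "\<dots> \<le> C * \<delta> powr (1/4) * measure lebesgue S"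
      using \<open>T \<delta> \<in> lmeasurable\<close> \<open>T \<delta> \<subseteq> S\<close> S \<open>0 \<le> C\<close>
      by (intro mult_left_mono measure_mono_fmeasurable) auto
    finally show ?case
      by (simp add: mult_ac)
  qed
  have "((\<lambda>\<delta>. C * measure lebesgue S * \<delta> powr (1/4)) \<longlongrightarrow> 0) (at_right 0)"
    using tendsto_mult_left[OF tendsto_powr_at_right_0, of "1/4" "C * measure lebesgue S"] by simp
  then show ?thesis
    by (rule tendsto_sandwich[OF _ bound tendsto_const, rotated]) simp
qed

theorem lemma3p12:
  fixes W :: "real^'n^'n \<Rightarrow> real" and \<Omega> :: "(real^'n) set"
    and \<Theta> :: "real \<Rightarrow> (real^'n) set" and u :: "real \<Rightarrow> real^'n \<Rightarrow> real^'n"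
    and Du :: "real \<Rightarrow> real^'n \<Rightarrow> real^'n^'n"
  assumes dim: "CARD('n) = 2 \<or> CARD('n) = 3"
    and dom: "lipschitz_domain \<Omega>"
    and W_nonneg: "\<forall>F. W F \<ge> 0"
    and W_frame: "\<forall>R F. R \<in> SOd \<longrightarrow> W (R ** F) = W F"
    and W_zero: "{F. W F = 0} = SOd"
    and W_C3: "\<exists>U. open U \<and> SOd \<subseteq> U \<and> C3_on U W"
    and W_coerc: "\<exists>c>0. \<forall>F. W F \<ge> c * (infdist F SOd)\<^sup>2"
    and Theta: "\<forall>\<delta>>0. open (\<Theta> \<delta>) \<and> \<Theta> \<delta> \<subseteq> \<Omega>"
    and H1: "\<forall>\<delta>>0. H1_on (\<Theta> \<delta>) (u \<delta>) (Du \<delta>)"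
    and Linf: "\<forall>\<delta>>0. AE x in lebesgue_on (\<Theta> \<delta>). norm (Du \<delta> x) \<le> \<delta> powr (-1/4)"
  shows "((\<lambda>\<delta>. \<bar>(1 / \<delta>\<^sup>2) * (\<integral>x. W (mat 1 + \<delta> *\<^sub>R Du \<delta> x) \<partial>lebesgue_on (\<Theta> \<delta>))
              - (1/2) * (\<integral>x. Qform W (symp (Du \<delta> x)) \<partial>lebesgue_on (\<Theta> \<delta>))\<bar>)
          \<longlongrightarrow> 0) (at_right 0)"
proof -
  obtain U where "open U" "SOd \<subseteq> U" "C3_on U W"
    using W_C3 by blast
  moreover have "W (mat 1) = 0"
    using W_zero mat1_in_SOd by blast
  ultimately obtain r C B where "0 < r" "0 \<le> C" "continuous_on (cball (mat 1) r) W"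
    and Q: "\<And>F. Qform W (symp F) = quadratic_form B F"
    and "\<And>F. norm F \<le> r \<Longrightarrow> \<bar>W (mat 1 + F) - quadratic_form B F / 2\<bar> \<le> C * norm F ^ 3"
    using frame_indifferent_energy_expansion[OF W_nonneg _ W_frame] mat1_in_SOd by blast
  moreover have "\<Omega> \<in> lmeasurable"
    using dom by (simp add: lipschitz_domain_def lmeasurable_open)
  moreover have "\<Theta> \<delta> \<in> sets lebesgue \<and> \<Theta> \<delta> \<subseteq> \<Omega>" if "0 < \<delta>" for \<delta>
    using Theta that by auto
  ultimately show ?thesis
    unfolding Q using H1 Linf
    by (intro linearized_energy_tendsto[where g = Du]) (auto simp: H1_on_def)
qed

end
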